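(* Let $Y\subseteq\Omega$, $D\in\mathcal{I}^{\mathbf{c}}(Y)$ and $e\in\max(Y)$. Then $$\pi(Y,D)-\pi(Y-\{e\},D-\{e\})=\begin{cases}\eta_{(e)}\Big(\prod_{i\in\langle\{e\}\rangle_Y-\{e\}}\tau_{(i)}\Big)x^{|\langle\{e\}\rangle_Y|}\,\pi(Y-\langle\{e\}\rangle_Y,D),& e\notin D;\\ 0,& e\in D-\min(D);\\ -\Big(\prod_{i\in\langle\{e\}\rangle_Y-\{e\}}\tau_{(i)}\Big)x^{|\langle\{e\}\rangle_Y|}\,\pi(Y-\langle\{e\}\rangle_Y,D-\{e\}),& e\in\min(D).\end{cases}$$
   Context: $\Omega$ is a finite set and $\mathbf{P}=(\Omega,\preccurlyeq_{\mathbf{P}})$ a poset. For $Y\subseteq\Omega$: $\max(Y)$, $\min(Y)$ are the maximal, minimal elements of $Y$ w.r.t. $\preccurlyeq_{\mathbf{P}}$; $\mathcal{I}(Y)$ is the set of down-closed subsets of $Y$ (induced order); $\mathcal{I}^{\mathbf{c}}(Y)$ is the set of up-closed subsets of $Y$; for $A\subseteq Y$, $\langle A\rangle_Y=\{y\in Y:\exists a\in A, y\preccurlyeq_{\mathbf{P}}a\}$. $K$ is a commutative ring, $\tau,\eta\in K^{\Omega}$. For $D,I\subseteq\Omega$, $\varphi(D,I)=(-1)^{|I\cap D|}\big(\prod_{i\in I-\max(I)}\tau_{(i)}\big)\big(\prod_{i\in\max(I)-D}\eta_{(i)}\big)$ if $I\cap D\subseteq\max(I)$, and $0$ otherwise;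 for $D\subseteq Y\subseteq\Omega$, $\pi(Y,D)=\sum_{I\in\mathcal{I}(Y)}\varphi(D,I)x^{|I|}\in K[x]$. *)

theory Defs
  imports "HOL-Computational_Algebra.Polynomial"
begin

definition partial_order_pred :: "'a set \<Rightarrow> ('a \<Rightarrow> 'a \<Rightarrow> bool) \<Rightarrow> bool" where
  "partial_order_pred \<Omega> le \<longleftrightarrow>
     (\<forall>x\<in>\<Omega>. le x x) \<and>
     (\<forall>x\<in>\<Omega>. \<forall>y\<in>\<Omega>. le x y \<and> le y x \<longrightarrow> x = y) \<and>
     (\<forall>x\<in>\<Omega>. \<forall>y\<in>\<Omega>. \<forall>z\<in>\<Omega>. le x y \<and> le y z \<longrightarrow> le x z)"

definition maxs :: "('a \<Rightarrow> 'a \<Rightarrow> bool) \<Rightarrow> 'a set \<Rightarrow> 'a set" where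
  "maxs le Y = {y\<in>Y. \<forall>z\<in>Y. le y z \<longrightarrow> z = y}"

definition mins :: "('a \<Rightarrow> 'a \<Rightarrow> bool) \<Rightarrow> 'a set \<Rightarrow> 'a set" where
  "mins le Y = {y\<in>Y. \<forall>z\<in>Y. le z y \<longrightarrow> z = y}"

definition downsets :: "('a \<Rightarrow> 'a \<Rightarrow> bool) \<Rightarrow> 'a set \<Rightarrow> 'a set set" where
  "downsets le Y = {I. I \<subseteq> Y \<and> (\<forall>a\<in>I. \<forall>y\<in>Y. le y a \<longrightarrow> y \<in> I)}"

text \<open>Up-closed subsets of Y (the set I^c(Y)).\<close>
definition upsets :: "('a \<Rightarrow> 'a \<Rightarrow> bool) \<Rightarrow> 'a set \<Rightarrow> 'a set set" where
  "upsets le Y = {I. I \<subseteq> Y \<and> (\<forall>a\<in>I. \<forall>y\<in>Y. le a y \<longrightarrow> y \<in> I)}"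

definition down_gen :: "('a \<Rightarrow> 'a \<Rightarrow> bool) \<Rightarrow> 'a set \<Rightarrow> 'a set \<Rightarrow> 'a set" where
  "down_gen le Y A = {y\<in>Y. \<exists>a\<in>A. le y a}"

definition phi :: "('a \<Rightarrow> 'a \<Rightarrow> bool) \<Rightarrow> ('a \<Rightarrow> 'k::comm_ring_1) \<Rightarrow> ('a \<Rightarrow> 'k)
                   \<Rightarrow> 'a set \<Rightarrow> 'a set \<Rightarrow> 'k" where
  "phi le \<tau> \<eta> D I =
     (if I \<inter> D \<subseteq> maxs le I
      then (-1) ^ card (I \<inter> D) * (\<Prod>i\<in>I - maxs le I. \<tau> i) * (\<Prod>i\<in>maxs le I - D. \<eta> i)
      else 0)"

definition pi_poly :: "('a \<Rightarrow> 'a \<Rightarrow> bool) \<Rightarrow> ('a \<Rightarrow> 'k::comm_ring_1) \<Rightarrow> ('a \<Rightarrow> 'k)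
                   \<Rightarrow> 'a set \<Rightarrow> 'a set \<Rightarrow> 'k poly" where
  "pi_poly le \<tau> \<eta> Y D = (\<Sum>I\<in>downsets le Y. monom (phi le \<tau> \<eta> D I) (card I))"

end

theory Submission
  imports Defs
begin

text \<open>
  Split the down-sets \<open>I\<close> of \<open>Y\<close> according to whether they contain the maximal element \<open>e\<close>.
  Those avoiding \<open>e\<close> are exactly the down-sets of \<open>Y - {e}\<close>, and for them \<open>\<phi>(D, I)\<close> does not
  see whether \<open>e \<in> D\<close>; they make up \<open>\<pi>(Y - {e}, D - {e})\<close>. Those containing \<open>e\<close> contain
  \<open>E = \<langle>{e}\<rangle>\<^sub>Y\<close>, so they are the sets \<open>E \<union> J\<close> with \<open>J\<close> a down-set of \<open>Y - E\<close>, and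
  the maximal elements of \<open>E \<union> J\<close> are \<open>e\<close> together with those of \<open>J\<close>. If some element of the
  up-set \<open>D\<close> lies strictly below \<open>e\<close>, it is a non-maximal element of \<open>(E \<union> J) \<inter> D\<close> and
  \<open>\<phi>(D, E \<union> J) = 0\<close>. Otherwise \<open>D\<close> meets \<open>E\<close> at most in \<open>e\<close>, and \<open>\<phi>(D, E \<union> J)\<close> is
  \<open>\<phi>(D, J)\<close> or \<open>\<phi>(D - {e}, J)\<close> times a factor independent of \<open>J\<close>.
\<close>

lemma partial_order_predD:
  assumes "partial_order_pred \<Omega> le"
  shows partial_order_pred_refl: "x \<in> \<Omega> \<Longrightarrow> le x x"
    and partial_order_pred_trans:
      "x \<in> \<Omega> \<Longrightarrow> y \<in> \<Omega> \<Longrightarrow> z \<in> \<Omega> \<Longrightarrow> le x y \<Longrightarrow> le y z \<Longrightarrow> le x z"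
  using assms unfolding partial_order_pred_def by blast+

lemma finite_downsets: "finite Y \<Longrightarrow> finite (downsets le Y)"
  by (rule finite_subset[of _ "Pow Y"]) (auto simp: downsets_def)

lemma mem_down_gen_self:
  "partial_order_pred \<Omega> le \<Longrightarrow> Y \<subseteq> \<Omega> \<Longrightarrow> a \<in> Y \<Longrightarrow> a \<in> down_gen le Y {a}"
  unfolding down_gen_def by (auto dest: partial_order_pred_refl)

lemma down_gen_in_downsets:
  assumes po: "partial_order_pred \<Omega> le" and "Y \<subseteq> \<Omega>" and "A \<subseteq> \<Omega>"
  shows "down_gen le Y A \<in> downsets le Y"
proof -
  have "y \<in> down_gen le Y A" if "x \<in> down_gen le Y A" "y \<in> Y" "le y x" for x y
  proof -
    obtain a where "a \<in> A" "x \<in> Y" "le x a"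
      using \<open>x \<in> down_gen le Y A\<close> unfolding down_gen_def by blast
    with that assms have "le y a"
      using partial_order_pred_trans[OF po, of y x a] by blast
    with \<open>a \<in> A\<close> \<open>y \<in> Y\<close> show ?thesis unfolding down_gen_def by blast
  qed
  then show ?thesis unfolding downsets_def down_gen_def by blast
qed

lemma Un_in_downsets:
  "E \<in> downsets le Y \<Longrightarrow> J \<in> downsets le (Y - E) \<Longrightarrow> E \<union> J \<in> downsets le Y"
  unfolding downsets_def by blast

lemma Diff_in_downsets: "I \<in> downsets le Y \<Longrightarrow> I - E \<in> downsets le (Y - E)"
  unfolding downsets_def by blast

lemma maxs_memD: "x \<in> maxs le Y \<Longrightarrow> x \<in> Y"
  unfolding maxs_def by blast

lemma downsets_avoiding_max:
  assumes "e \<in> maxs le Y"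
  shows "{I \<in> downsets le Y. e \<notin> I} = downsets le (Y - {e})"
  using assms unfolding downsets_def maxs_def by blast

lemma downsets_containing:
  assumes po: "partial_order_pred \<Omega> le" and "Y \<subseteq> \<Omega>" and "a \<in> Y"
  defines "E \<equiv> down_gen le Y {a}"
  shows "{I \<in> downsets le Y. a \<in> I} = (\<union>) E ` downsets le (Y - E)"
proof (intro equalityI subsetI)
  fix I assume I: "I \<in> {I \<in> downsets le Y. a \<in> I}"
  then have "E \<subseteq> I" unfolding E_def downsets_def down_gen_def by blast
  then have "I = E \<union> (I - E)" by blast
  moreover have "I - E \<in> downsets le (Y - E)" using I Diff_in_downsets by blast
  ultimately show "I \<in> (\<union>) E ` downsets le (Y - E)" by blast
next
  have "a \<in> E" and "E \<in> downsets le Y"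
    unfolding E_def using assms(2,3)
    by (auto intro!: mem_down_gen_self[OF po] down_gen_in_downsets[OF po])
  then show "I \<in> {I \<in> downsets le Y. a \<in> I}" if "I \<in> (\<union>) E ` downsets le (Y - E)" for I
    using that Un_in_downsets by blast
qed

lemma phi_Diff_singleton_not_mem: "e \<notin> I \<Longrightarrow> phi le \<tau> \<eta> (D - {e}) I = phi le \<tau> \<eta> D I"
proof -
  assume "e \<notin> I"
  then have "I \<inter> (D - {e}) = I \<inter> D" and "maxs le I - (D - {e}) = maxs le I - D"
    unfolding maxs_def by blast+
  then show ?thesis unfolding phi_def by simp
qed

lemma upset_inter_down_gen_subset:
  assumes "D \<in> upsets le Y" and "e \<in> Y" and "e \<notin> D \<or> e \<in> mins le D"
  shows "D \<inter> down_gen le Y {e} \<subseteq> {e}"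
  using assms unfolding upsets_def mins_def down_gen_def by auto

lemma smult_monom_mult_pi_poly:
  "smult c (monom 1 n * pi_poly le \<tau> \<eta> Y D)
    = (\<Sum>J\<in>downsets le Y. monom (c * phi le \<tau> \<eta> D J) (n + card J))"
  unfolding smult_monom_mult mult_1_right pi_poly_def by (simp add: sum_distrib_left mult_monom)

context
  fixes \<Omega> Y :: "'a set" and le :: "'a \<Rightarrow> 'a \<Rightarrow> bool" and e :: 'a
  assumes po: "partial_order_pred \<Omega> le" and Y_sub: "Y \<subseteq> \<Omega>" and e_max: "e \<in> maxs le Y"
begin

lemma max_mem_down_gen: "e \<in> down_gen le Y {e}"
  using mem_down_gen_self[OF po Y_sub maxs_memD[OF e_max]] .

lemma downsets_split_max:
  "downsets le Y
    = downsets le (Y - {e}) \<union> (\<union>) (down_gen le Y {e}) ` downsets le (Y - down_gen le Y {e})"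
proof -
  have "downsets le Y = {I \<in> downsets le Y. e \<notin> I} \<union> {I \<in> downsets le Y. e \<in> I}"
    by blast
  then show ?thesis
    unfolding downsets_avoiding_max[OF e_max]
      downsets_containing[OF po Y_sub maxs_memD[OF e_max]] .
qed

lemma maxs_down_gen_Un:
  assumes J: "J \<subseteq> Y - down_gen le Y {e}"
  shows "maxs le (down_gen le Y {e} \<union> J) = insert e (maxs le J)"
proof -
  define E where "E = down_gen le Y {e}"
  have below_max: "le x e" if "x \<in> E" for x
    using that unfolding E_def down_gen_def by blast
  have not_below: "\<not> le x z" if "x \<in> J" "z \<in> E" for x z
  proof
    assume "le x z"
    with that J Y_sub maxs_memD[OF e_max] below_max have "le x e"
      using partial_order_pred_trans[OF po, of x z e] unfolding E_def down_gen_def by blast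
    with that J show False unfolding E_def down_gen_def by blast
  qed
  have "e \<in> maxs le (E \<union> J)"
    using e_max max_mem_down_gen J unfolding E_def maxs_def down_gen_def by blast
  moreover have "x = e" if "x \<in> maxs le (E \<union> J)" "x \<in> E" for x
    using that max_mem_down_gen below_max unfolding E_def maxs_def by blast
  moreover have "x \<in> maxs le J" if "x \<in> maxs le (E \<union> J)" "x \<notin> E" for x
    using that unfolding maxs_def by blast
  moreover have "x \<in> maxs le (E \<union> J)" if "x \<in> maxs le J" for x
    using that not_below unfolding maxs_def by blast
  ultimately show ?thesis unfolding E_def[symmetric] by blast
qed

lemma phi_down_gen_Un_nonminimal:
  assumes J: "J \<subseteq> Y - down_gen le Y {e}" and D: "D \<in> upsets le Y" and "e \<in> D - mins le D"
  shows "phi le \<tau> \<eta> D (down_gen le Y {e} \<union> J) = 0"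
proof -
  obtain z where z: "z \<in> D" "le z e" "z \<noteq> e"
    using \<open>e \<in> D - mins le D\<close> unfolding mins_def by blast
  then have "z \<in> down_gen le Y {e}"
    using D unfolding upsets_def down_gen_def by blast
  then have "z \<in> (down_gen le Y {e} \<union> J) \<inter> D" "z \<notin> maxs le (down_gen le Y {e} \<union> J)"
    using z maxs_down_gen_Un[OF J] J unfolding maxs_def by auto
  then show ?thesis unfolding phi_def by auto
qed

context
  assumes fin: "finite Y"
begin

lemma prod_nonmaxs_down_gen_Un:
  assumes J: "J \<subseteq> Y - down_gen le Y {e}"
  shows "(\<Prod>i\<in>(down_gen le Y {e} \<union> J) - maxs le (down_gen le Y {e} \<union> J). f i)
    = (\<Prod>i\<in>down_gen le Y {e} - {e}. f i) * (\<Prod>i\<in>J - maxs le J. f i)"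
proof -
  have "(down_gen le Y {e} \<union> J) - maxs le (down_gen le Y {e} \<union> J)
      = (down_gen le Y {e} - {e}) \<union> (J - maxs le J)"
    using maxs_down_gen_Un[OF J] max_mem_down_gen J unfolding maxs_def by blast
  moreover have "finite (down_gen le Y {e})" "finite J"
    using fin J unfolding down_gen_def by (auto intro: finite_subset)
  ultimately show ?thesis
    using J by (simp only:) (rule prod.union_disjoint; blast)
qed

lemma phi_down_gen_Un_not_mem:
  assumes J: "J \<subseteq> Y - down_gen le Y {e}" and D: "D \<in> upsets le Y" and "e \<notin> D"
  shows "phi le \<tau> \<eta> D (down_gen le Y {e} \<union> J)
    = \<eta> e * (\<Prod>i\<in>down_gen le Y {e} - {e}. \<tau> i) * phi le \<tau> \<eta> D J"
proof -
  define E where "E = down_gen le Y {e}"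
  have M: "maxs le (E \<union> J) = insert e (maxs le J)"
    using maxs_down_gen_Un[OF J] unfolding E_def .
  have "(E \<union> J) \<inter> D = J \<inter> D"
    using upset_inter_down_gen_subset[OF D maxs_memD[OF e_max]] \<open>e \<notin> D\<close>
    unfolding E_def by blast
  then have cond: "(E \<union> J) \<inter> D \<subseteq> maxs le (E \<union> J) \<longleftrightarrow> J \<inter> D \<subseteq> maxs le J"
    using M \<open>e \<notin> D\<close> by auto
  have "finite (maxs le J)" "e \<notin> maxs le J"
    using fin J max_mem_down_gen unfolding E_def maxs_def by (auto intro: finite_subset)
  then have "(\<Prod>i\<in>maxs le (E \<union> J) - D. \<eta> i) = \<eta> e * (\<Prod>i\<in>maxs le J - D. \<eta> i)"
    unfolding M using \<open>e \<notin> D\<close> by (simp add: insert_Diff_if)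
  moreover have "(\<Prod>i\<in>(E \<union> J) - maxs le (E \<union> J). \<tau> i)
      = (\<Prod>i\<in>E - {e}. \<tau> i) * (\<Prod>i\<in>J - maxs le J. \<tau> i)"
    using prod_nonmaxs_down_gen_Un[OF J] unfolding E_def .
  ultimately show ?thesis
    using \<open>(E \<union> J) \<inter> D = J \<inter> D\<close> cond unfolding phi_def E_def[symmetric]
    by (simp add: ac_simps)
qed

lemma phi_down_gen_Un_minimal:
  assumes J: "J \<subseteq> Y - down_gen le Y {e}" and D: "D \<in> upsets le Y" and "e \<in> mins le D"
  shows "phi le \<tau> \<eta> D (down_gen le Y {e} \<union> J)
    = - ((\<Prod>i\<in>down_gen le Y {e} - {e}. \<tau> i) * phi le \<tau> \<eta> (D - {e}) J)"
proof -
  define E where "E = down_gen le Y {e}"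
  have M: "maxs le (E \<union> J) = insert e (maxs le J)"
    using maxs_down_gen_Un[OF J] unfolding E_def .
  have "e \<in> D" "e \<notin> J"
    using \<open>e \<in> mins le D\<close> J max_mem_down_gen unfolding mins_def E_def by auto
  have ID: "(E \<union> J) \<inter> D = insert e (J \<inter> (D - {e}))"
    using upset_inter_down_gen_subset[OF D maxs_memD[OF e_max]] \<open>e \<in> mins le D\<close> \<open>e \<in> D\<close>
      max_mem_down_gen unfolding E_def by blast
  then have cond: "(E \<union> J) \<inter> D \<subseteq> maxs le (E \<union> J) \<longleftrightarrow> J \<inter> (D - {e}) \<subseteq> maxs le J"
    using M \<open>e \<notin> J\<close> by auto
  have "finite J" using fin J by (auto intro: finite_subset)
  then have "card ((E \<union> J) \<inter> D) = Suc (card (J \<inter> (D - {e})))"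
    unfolding ID using \<open>e \<notin> J\<close> by simp
  moreover have "maxs le (E \<union> J) - D = maxs le J - (D - {e})"
    using M \<open>e \<in> D\<close> \<open>e \<notin> J\<close> unfolding maxs_def by auto
  moreover have "(\<Prod>i\<in>(E \<union> J) - maxs le (E \<union> J). \<tau> i)
      = (\<Prod>i\<in>E - {e}. \<tau> i) * (\<Prod>i\<in>J - maxs le J. \<tau> i)"
    using prod_nonmaxs_down_gen_Un[OF J] unfolding E_def .
  ultimately show ?thesis
    using cond unfolding phi_def E_def[symmetric] by (simp add: ac_simps)
qed

lemma pi_poly_remove_max:
  "pi_poly le \<tau> \<eta> Y D = pi_poly le \<tau> \<eta> (Y - {e}) (D - {e})
    + (\<Sum>J\<in>downsets le (Y - down_gen le Y {e}).
         monom (phi le \<tau> \<eta> D (down_gen le Y {e} \<union> J)) (card (down_gen le Y {e}) + card J))"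
proof -
  define E where "E = down_gen le Y {e}"
  define f where "f I = monom (phi le \<tau> \<eta> D I) (card I)" for I
  have "finite E" using fin unfolding E_def down_gen_def by simp
  have disjoint: "downsets le (Y - {e}) \<inter> (\<union>) E ` downsets le (Y - E) = {}"
    using max_mem_down_gen unfolding E_def downsets_def by blast
  have "inj_on ((\<union>) E) (downsets le (Y - E))"
    unfolding downsets_def inj_on_def by blast
  then have "sum f ((\<union>) E ` downsets le (Y - E)) = (\<Sum>J\<in>downsets le (Y - E). f (E \<union> J))"
    by (simp add: sum.reindex)
  also have "\<dots> = (\<Sum>J\<in>downsets le (Y - E). monom (phi le \<tau> \<eta> D (E \<union> J)) (card E + card J))"
  proof (intro sum.cong refl)
    fix J assume "J \<in> downsets le (Y - E)"
    then have "finite J" "E \<inter> J = {}"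
      using fin finite_subset unfolding downsets_def by blast+
    then show "f (E \<union> J) = monom (phi le \<tau> \<eta> D (E \<union> J)) (card E + card J)"
      unfolding f_def using \<open>finite E\<close> by (simp add: card_Un_disjoint)
  qed
  moreover have "sum f (downsets le (Y - {e})) = pi_poly le \<tau> \<eta> (Y - {e}) (D - {e})"
    unfolding pi_poly_def f_def
    by (intro sum.cong refl) (auto simp: downsets_def intro!: phi_Diff_singleton_not_mem[symmetric])
  moreover have "pi_poly le \<tau> \<eta> Y D
      = sum f (downsets le (Y - {e})) + sum f ((\<union>) E ` downsets le (Y - E))"
    unfolding pi_poly_def f_def[symmetric] downsets_split_max E_def[symmetric]
    using disjoint fin by (intro sum.union_disjoint) (auto intro: finite_downsets)
  ultimately show ?thesis unfolding E_def by simp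
qed

end

end

theorem lemma3p1:
  fixes \<Omega> :: "'a set" and le :: "'a \<Rightarrow> 'a \<Rightarrow> bool"
    and \<tau> \<eta> :: "'a \<Rightarrow> 'k::comm_ring_1"
    and Y D :: "'a set" and e :: 'a
  assumes "finite \<Omega>" and "partial_order_pred \<Omega> le"
    and "Y \<subseteq> \<Omega>" and "D \<in> upsets le Y" and "e \<in> maxs le Y"
  shows "pi_poly le \<tau> \<eta> Y D - pi_poly le \<tau> \<eta> (Y - {e}) (D - {e}) =
    (if e \<notin> D then
       smult (\<eta> e * (\<Prod>i\<in>down_gen le Y {e} - {e}. \<tau> i))
         (monom 1 (card (down_gen le Y {e})) * pi_poly le \<tau> \<eta> (Y - down_gen le Y {e}) D)
     else if e \<in> D - mins le D then 0
     else - smult (\<Prod>i\<in>down_gen le Y {e} - {e}. \<tau> i)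
         (monom 1 (card (down_gen le Y {e})) * pi_poly le \<tau> \<eta> (Y - down_gen le Y {e}) (D - {e})))"
proof -
  have fin: "finite Y" using assms(1,3) finite_subset by blast
  note max = assms(2,3,5)
  let ?E = "down_gen le Y {e}"
  have J: "J \<subseteq> Y - ?E" if "J \<in> downsets le (Y - ?E)" for J
    using that unfolding downsets_def by blast
  have diff: "pi_poly le \<tau> \<eta> Y D - pi_poly le \<tau> \<eta> (Y - {e}) (D - {e})
      = (\<Sum>J\<in>downsets le (Y - ?E). monom (phi le \<tau> \<eta> D (?E \<union> J)) (card ?E + card J))"
    unfolding pi_poly_remove_max[OF max fin, of \<tau> \<eta> D] by simp
  consider (not_mem) "e \<notin> D" | (nonminimal) "e \<in> D - mins le D" | (minimal) "e \<in> mins le D"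
    by blast
  then show ?thesis
  proof cases
    case not_mem
    then show ?thesis
      unfolding diff smult_monom_mult_pi_poly
      using phi_down_gen_Un_not_mem[OF max fin J assms(4) not_mem, where \<tau>=\<tau> and \<eta>=\<eta>]
      by (simp cong: sum.cong)
  next
    case nonminimal
    then show ?thesis
      unfolding diff
      using phi_down_gen_Un_nonminimal[OF max J assms(4) nonminimal, where \<tau>=\<tau> and \<eta>=\<eta>]
      by (simp cong: sum.cong)
  next
    case minimal
    then have "e \<in> D" "e \<notin> D - mins le D" unfolding mins_def by blast+
    then show ?thesis
      unfolding diff smult_monom_mult_pi_poly
      using phi_down_gen_Un_minimal[OF max fin J assms(4) minimal, where \<tau>=\<tau> and \<eta>=\<eta>]
      by (simp add: sum_negf[symmetric] minus_monom cong: sum.cong)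
  qed
qed

end
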